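(* For all positive integers $n$ and $m$, the Pancake graphs satisfy $\chi(P_{n+m})\leqslant\chi(P_n)+\chi(P_m)$.
   Context: For $n\geqslant 1$, the Pancake graph $P_n$ is the Cayley graph on the symmetric group $\mathrm{Sym}_n$, with permutations written in one-line notation $\pi=[\pi_1\pi_2\ldots\pi_n]$. Its generating set consists of the prefix-reversals $r_i$, $2\leqslant i\leqslant n$. Multiplying $\pi$ on the right by $r_i$ reverses the first $i$ entries: $\pi r_i=[\pi_i\pi_{i-1}\ldots\pi_1\pi_{i+1}\ldots\pi_n]$. Two vertices $\pi,\sigma$ are adjacent iff $\sigma=\pi r_i$ for some $2\leqslant i\leqslant n$. In particular $P_1$ is a single vertex. $\chi$ denotes the chromatic number. *)

theory Defs
  imports Main
begin

text \<open>Vertices of the Pancake graph P_n: permutations of {1..n} in one-line notation,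
  represented as lists.\<close>
definition pancake_vertices :: "nat \<Rightarrow> nat list set" where
  "pancake_vertices n = {p. distinct p \<and> set p = {1..n}}"

text \<open>Right multiplication by the prefix reversal r_i: reverse the first i entries.\<close>
definition prefix_rev :: "nat \<Rightarrow> nat list \<Rightarrow> nat list" where
  "prefix_rev i p = rev (take i p) @ drop i p"

definition pancake_adj :: "nat \<Rightarrow> nat list \<Rightarrow> nat list \<Rightarrow> bool" where
  "pancake_adj n p q \<longleftrightarrow> p \<in> pancake_vertices n \<and> q \<in> pancake_vertices n \<and>
     (\<exists>i. 2 \<le> i \<and> i \<le> n \<and> q = prefix_rev i p)"

definition pancake_colorable :: "nat \<Rightarrow> nat \<Rightarrow> bool" where
  "pancake_colorable n k \<longleftrightarrow>
     (\<exists>c :: nat list \<Rightarrow> nat. (\<forall>p \<in> pancake_vertices n. c p < k) \<and>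
        (\<forall>p q. pancake_adj n p q \<longrightarrow> c p \<noteq> c q))"

definition pancake_chi :: "nat \<Rightarrow> nat" where
  "pancake_chi n = (LEAST k. pancake_colorable n k)"

end

theory Submission
  imports Defs
begin

text \<open>Colour a permutation of \<open>{1..n+m}\<close> according to whether its first entry is small
  (at most \<open>n\<close>) or large. Two adjacent vertices with small first entries have subsequences of
  small entries that are adjacent in \<open>P\<^sub>n\<close>: a prefix reversal of the whole permutation
  induces a prefix reversal of the subsequence, and it moves at least two small entries because
  both ends of the reversed prefix are small. The same holds for large entries, shifted down
  by \<open>n\<close>, in \<open>P\<^sub>m\<close>. So the first colour classes come from a colouring of \<open>P\<^sub>n\<close>,
  the remaining ones from a colouring of \<open>P\<^sub>m\<close>.\<close>

lemma filter_prefix_rev: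
  "filter P (prefix_rev i xs) = prefix_rev (length (filter P (take i xs))) (filter P xs)"
proof -
  have "filter P xs = filter P (take i xs) @ filter P (drop i xs)"
    by (metis append_take_drop_id filter_append)
  then show ?thesis unfolding prefix_rev_def by (simp add: rev_filter)
qed

lemma map_prefix_rev: "map f (prefix_rev i xs) = prefix_rev i (map f xs)"
  unfolding prefix_rev_def by (simp add: rev_map take_map drop_map)

lemma hd_prefix_rev:
  assumes "1 \<le> i" "i \<le> length xs"
  shows "hd (prefix_rev i xs) = xs ! (i - 1)"
proof -
  have "take i xs \<noteq> []" using assms by auto
  then show ?thesis using assms unfolding prefix_rev_def
    by (simp add: hd_append hd_rev last_conv_nth)
qed

lemma length_filter_take_le: "length (filter P (take i xs)) \<le> length (filter P xs)"
  by (metis append_take_drop_id filter_append length_append le_add1)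

lemma two_le_length_filter_take:
  assumes "2 \<le> i" "i \<le> length xs" "P (xs ! 0)" "P (xs ! (i - 1))"
  shows "2 \<le> length (filter P (take i xs))"
proof -
  have "{0, i - 1} \<subseteq> {k. k < length (take i xs) \<and> P (take i xs ! k)}"
    using assms by auto
  then have "card {0::nat, i - 1} \<le> card {k. k < length (take i xs) \<and> P (take i xs ! k)}"
    by (intro card_mono) auto
  moreover have "card {0::nat, i - 1} = 2" using assms by auto
  ultimately show ?thesis by (simp add: length_filter_conv_card)
qed

lemma filter_prefix_rev_is_prefix_rev:
  assumes "2 \<le> i" "i \<le> length xs" "P (hd xs)" "P (hd (prefix_rev i xs))"
  obtains j where "2 \<le> j" "j \<le> length (filter P xs)"
    "filter P (prefix_rev i xs) = prefix_rev j (filter P xs)"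
proof
  let ?j = "length (filter P (take i xs))"
  have "hd xs = xs ! 0" using assms(1,2) by (cases xs) auto
  moreover have "hd (prefix_rev i xs) = xs ! (i - 1)" using assms(1,2) by (simp add: hd_prefix_rev)
  ultimately show "2 \<le> ?j" using assms by (intro two_le_length_filter_take) auto
  show "?j \<le> length (filter P xs)" by (rule length_filter_take_le)
  show "filter P (prefix_rev i xs) = prefix_rev ?j (filter P xs)" by (rule filter_prefix_rev)
qed

lemma length_pancake_vertex:
  assumes "p \<in> pancake_vertices n"
  shows "length p = n"
proof -
  have "distinct p" "set p = {1..n}" using assms unfolding pancake_vertices_def by auto
  then show ?thesis using distinct_card by fastforce
qed

definition lower_part :: "nat \<Rightarrow> nat list \<Rightarrow> nat list" where
  "lower_part n p = filter (\<lambda>x. x \<le> n) p"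

definition upper_part :: "nat \<Rightarrow> nat list \<Rightarrow> nat list" where
  "upper_part n p = map (\<lambda>x. x - n) (filter (\<lambda>x. n < x) p)"

lemma lower_part_in_pancake_vertices:
  "p \<in> pancake_vertices (n + m) \<Longrightarrow> lower_part n p \<in> pancake_vertices n"
  unfolding pancake_vertices_def lower_part_def by auto

lemma upper_part_in_pancake_vertices:
  assumes "p \<in> pancake_vertices (n + m)"
  shows "upper_part n p \<in> pancake_vertices m"
proof -
  have "distinct p" and p_set: "set p = {1..n + m}"
    using assms unfolding pancake_vertices_def by auto
  have "inj_on (\<lambda>x. x - n) (set (filter (\<lambda>x. n < x) p))"
    by (auto simp: inj_on_def)
  then have "distinct (upper_part n p)"
    using \<open>distinct p\<close> unfolding upper_part_def by (simp add: distinct_map)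
  have "set (upper_part n p) = (\<lambda>x. x - n) ` {n + 1..n + m}"
    unfolding upper_part_def using p_set by (auto intro!: image_cong)
  also have "\<dots> = {1..m}"
  proof
    show "{1..m} \<subseteq> (\<lambda>x. x - n) ` {n + 1..n + m}"
    proof
      fix y assume "y \<in> {1..m}"
      then show "y \<in> (\<lambda>x. x - n) ` {n + 1..n + m}" by (intro image_eqI[of _ _ "y + n"]) auto
    qed
  qed auto
  finally show ?thesis
    using \<open>distinct (upper_part n p)\<close> unfolding pancake_vertices_def by simp
qed

lemma pancake_adj_lower_part:
  assumes adj: "pancake_adj (n + m) p q" and "hd p \<le> n" "hd q \<le> n"
  shows "pancake_adj n (lower_part n p) (lower_part n q)"
proof -
  obtain i where i: "2 \<le> i" "i \<le> n + m" "q = prefix_rev i p"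
    and pv: "p \<in> pancake_vertices (n + m)" and qv: "q \<in> pancake_vertices (n + m)"
    using adj unfolding pancake_adj_def by auto
  have "i \<le> length p" using i(2) length_pancake_vertex[OF pv] by simp
  then obtain j where "2 \<le> j" "j \<le> length (lower_part n p)"
    "lower_part n q = prefix_rev j (lower_part n p)"
    using filter_prefix_rev_is_prefix_rev[OF i(1), of p "\<lambda>x. x \<le> n"] assms(2)
      assms(3)[unfolded i(3)] unfolding lower_part_def i(3) by blast
  then show ?thesis
    using lower_part_in_pancake_vertices[OF pv] lower_part_in_pancake_vertices[OF qv]
      length_pancake_vertex[OF lower_part_in_pancake_vertices[OF pv]]
    unfolding pancake_adj_def by auto
qed

lemma pancake_adj_upper_part:
  assumes adj: "pancake_adj (n + m) p q" and "n < hd p" "n < hd q"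
  shows "pancake_adj m (upper_part n p) (upper_part n q)"
proof -
  obtain i where i: "2 \<le> i" "i \<le> n + m" "q = prefix_rev i p"
    and pv: "p \<in> pancake_vertices (n + m)" and qv: "q \<in> pancake_vertices (n + m)"
    using adj unfolding pancake_adj_def by auto
  have "i \<le> length p" using i(2) length_pancake_vertex[OF pv] by simp
  then obtain j where j: "2 \<le> j" "j \<le> length (filter (\<lambda>x. n < x) p)"
    and filter_q: "filter (\<lambda>x. n < x) q = prefix_rev j (filter (\<lambda>x. n < x) p)"
    using filter_prefix_rev_is_prefix_rev[OF i(1), of p "\<lambda>x. n < x"] assms(2)
      assms(3)[unfolded i(3)] unfolding i(3) by blast
  have "upper_part n q = prefix_rev j (upper_part n p)"
    unfolding upper_part_def filter_q by (rule map_prefix_rev)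
  moreover have "j \<le> length (upper_part n p)"
    using j unfolding upper_part_def by simp
  ultimately show ?thesis
    using j upper_part_in_pancake_vertices[OF pv] upper_part_in_pancake_vertices[OF qv]
      length_pancake_vertex[OF upper_part_in_pancake_vertices[OF pv]]
    unfolding pancake_adj_def by blast
qed

lemma pancake_colorable_add:
  assumes "pancake_colorable n k" and "pancake_colorable m l"
  shows "pancake_colorable (n + m) (k + l)"
proof -
  obtain c where c_range: "\<forall>p \<in> pancake_vertices n. c p < k"
    and c_proper: "\<forall>p q. pancake_adj n p q \<longrightarrow> c p \<noteq> c q"
    using assms(1) unfolding pancake_colorable_def by blast
  obtain d where d_range: "\<forall>p \<in> pancake_vertices m. d p < l"
    and d_proper: "\<forall>p q. pancake_adj m p q \<longrightarrow> d p \<noteq> d q"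
    using assms(2) unfolding pancake_colorable_def by blast
  define e where
    "e p = (if hd p \<le> n then c (lower_part n p) else k + d (upper_part n p))" for p
  have "e p < k + l" if "p \<in> pancake_vertices (n + m)" for p
  proof -
    have "c (lower_part n p) < k" "d (upper_part n p) < l"
      using c_range d_range lower_part_in_pancake_vertices[OF that]
        upper_part_in_pancake_vertices[OF that] by blast+
    then show ?thesis unfolding e_def by simp
  qed
  moreover have "e p \<noteq> e q" if adj: "pancake_adj (n + m) p q" for p q
  proof -
    have "p \<in> pancake_vertices (n + m)" "q \<in> pancake_vertices (n + m)"
      using adj unfolding pancake_adj_def by auto
    then have low_p: "c (lower_part n p) < k" and low_q: "c (lower_part n q) < k"
      using c_range lower_part_in_pancake_vertices by blast+
    consider "hd p \<le> n" "hd q \<le> n" | "n < hd p" "n < hd q"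
      | "hd p \<le> n" "n < hd q" | "n < hd p" "hd q \<le> n"
      by linarith
    then show ?thesis
    proof cases
      case 1
      then show ?thesis using c_proper pancake_adj_lower_part[OF adj] unfolding e_def by simp
    next
      case 2
      then show ?thesis using d_proper pancake_adj_upper_part[OF adj] unfolding e_def by simp
    next
      case 3
      then show ?thesis using low_p unfolding e_def by simp
    next
      case 4
      then show ?thesis using low_q unfolding e_def by simp
    qed
  qed
  ultimately show ?thesis unfolding pancake_colorable_def by blast
qed

text \<open>Colour by the first entry; \<open>[]\<close> (the only vertex of \<open>P\<^sub>0\<close>) is special-cased because
  \<open>hd []\<close> is unspecified.\<close>

lemma pancake_colorable_Suc: "pancake_colorable n (Suc n)"
  unfolding pancake_colorable_def
proof (intro exI[of _ "\<lambda>p. if p = [] then 0 else hd p"] conjI ballI allI impI)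
  fix p assume "p \<in> pancake_vertices n"
  then show "(if p = [] then 0 else hd p) < Suc n"
    unfolding pancake_vertices_def by (auto dest: hd_in_set)
next
  fix p q assume "pancake_adj n p q"
  then obtain i where i: "2 \<le> i" "i \<le> n" "q = prefix_rev i p"
    and pv: "p \<in> pancake_vertices n"
    unfolding pancake_adj_def by auto
  have len: "length p = n" using length_pancake_vertex[OF pv] .
  have "distinct p" using pv unfolding pancake_vertices_def by auto
  then have "p ! (i - 1) \<noteq> p ! 0" using i len by (simp add: nth_eq_iff_index_eq)
  moreover have "p \<noteq> []" using i len by auto
  moreover have "q \<noteq> []" using i len by (auto simp: prefix_rev_def)
  moreover have "hd q = p ! (i - 1)" using i len by (simp add: hd_prefix_rev)
  ultimately show "(if p = [] then 0 else hd p) \<noteq> (if q = [] then 0 else hd q)"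
    by (simp add: hd_conv_nth)
qed

lemma pancake_colorable_chi: "pancake_colorable n (pancake_chi n)"
  unfolding pancake_chi_def by (rule LeastI[of "pancake_colorable n", OF pancake_colorable_Suc])

theorem theorem2:
  fixes n m :: nat
  assumes "n \<ge> 1" and "m \<ge> 1"
  shows "pancake_chi (n + m) \<le> pancake_chi n + pancake_chi m"
proof -
  have "pancake_colorable (n + m) (pancake_chi n + pancake_chi m)"
    using pancake_colorable_add pancake_colorable_chi by blast
  then show ?thesis unfolding pancake_chi_def by (rule Least_le)
qed

end
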